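(* Let $G$ be a compact vector space over $\mathbb{F}_2$, let $k\ge1$ with $\dim\widehat G\ge2k$, and put $\alpha=\sum_{i=1}^k4^{-i}$. Then: (i) for every subgroup $V\le\widehat G$ with $|V|\le 4^k-1$ one has $\{\alpha|V|\}(1-\{\alpha|V|\})\ge1/12$; (ii) there is a measurable set $A\subset G$ of density $\alpha$, namely a disjoint union of cosets $A_1,\dots,A_k$ with $\mu_G(A_i)=4^{-i}$, such that $\tfrac{k}{2}\le\|\chi_A\|_{A(G)}\le k$.
   Context: $G$ is a compact Hausdorff abelian group with $x+x=0$ for all $x$; $\widehat G$ its dual, a discrete $\mathbb{F}_2$-vector space; $\mu_G$ Haar probability measure; density of $A$ is $\mu_G(A)$; $\widehat f(\gamma)=\int_G f\overline\gamma\,d\mu_G$; $\|f\|_{A(G)}=\sum_{\gamma\in\widehat G}|\widehat f(\gamma)|$. $\{t\}$ is the fractional part of $t$. *)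

theory Defs
  imports "HOL-Probability.Probability"
begin

definition dual_group :: "('a::{ab_group_add,topological_space} \<Rightarrow> complex) set" where
  "dual_group = {\<gamma>. continuous_on UNIV \<gamma> \<and> (\<forall>x y. \<gamma> (x + y) = \<gamma> x * \<gamma> y)
                     \<and> (\<forall>x. norm (\<gamma> x) = 1)}"

definition dual_subgroup :: "('a::{ab_group_add,topological_space} \<Rightarrow> complex) set \<Rightarrow> bool" where
  "dual_subgroup V \<longleftrightarrow> V \<subseteq> dual_group \<and> (\<lambda>x. 1) \<in> V
     \<and> (\<forall>\<gamma>\<in>V. \<forall>\<delta>\<in>V. (\<lambda>x. \<gamma> x * \<delta> x) \<in> V)
     \<and> (\<forall>\<gamma>\<in>V. (\<lambda>x. cnj (\<gamma> x)) \<in> V)"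

text \<open>The dual, written multiplicatively, has F_2-dimension at least n:
  it contains n linearly independent elements (no nonempty subproduct is trivial).\<close>
definition f2_dim_ge :: "('a \<Rightarrow> complex) set \<Rightarrow> nat \<Rightarrow> bool" where
  "f2_dim_ge D n \<longleftrightarrow> (\<exists>S\<subseteq>D. finite S \<and> card S = n \<and>
      (\<forall>T\<subseteq>S. T \<noteq> {} \<longrightarrow> (\<lambda>x. \<Prod>\<gamma>\<in>T. \<gamma> x) \<noteq> (\<lambda>x. 1)))"

definition is_haar :: "'a::{ab_group_add,topological_space} measure \<Rightarrow> bool" where
  "is_haar M \<longleftrightarrow> prob_space M \<and> sets M = sets borel \<and>
     (\<forall>g. \<forall>A\<in>sets M. emeasure M ((\<lambda>x. g + x) ` A) = emeasure M A)"

definition add_subgroup :: "'a::ab_group_add set \<Rightarrow> bool" where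
  "add_subgroup H \<longleftrightarrow> 0 \<in> H \<and> (\<forall>x\<in>H. \<forall>y\<in>H. x + y \<in> H) \<and> (\<forall>x\<in>H. - x \<in> H)"

definition fourier_coeff :: "'a measure \<Rightarrow> ('a \<Rightarrow> complex) \<Rightarrow> ('a \<Rightarrow> complex) \<Rightarrow> complex" where
  "fourier_coeff M f \<gamma> = (\<integral>x. f x * cnj (\<gamma> x) \<partial>M)"

definition A_norm :: "'a::{ab_group_add,topological_space} measure \<Rightarrow> ('a \<Rightarrow> complex) \<Rightarrow> ennreal" where
  "A_norm M f = (\<Sum>\<^sub>\<infinity>\<gamma>\<in>dual_group. ennreal (norm (fourier_coeff M f \<gamma>)))"

definition alpha :: "nat \<Rightarrow> real" where
  "alpha k = (\<Sum>i=1..k. (1/4) ^ i)"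

end

theory Submission
  imports Defs "HOL-Library.Function_Algebras"
begin

text \<open>
  (i) Every character squares to 1, so a finite subgroup V of the dual is an F_2-vector space
  and |V| = 2^m < 4^k. With 2^m = 3q + r, r \<in> {1, 2}, and alpha k = (1 - 4^-k) / 3 one gets
  alpha k |V| = q + (r - d) / 3 with 0 < d = 2^m / 4^k \<le> 1/2, so the fractional part of
  alpha k |V| lies in [1/6, 5/6].

  (ii) Take independent characters chi_0, ..., chi_(2k-1) and let A_i be the coset on which
  chi_j = 1 for j < 2i - 2 and chi_j = -1 for j = 2i - 2, 2i - 1. Expanding
  1_(A_i) = \<Prod>_(j<2i) (1 \<plusminus> chi_j) / 2 shows that the Fourier coefficient of 1_A at the Walsh
  character chi_T = \<Prod>_(j\<in>T) chi_j is a sum of terms \<plusminus>4^-i, one for each i with T \<subseteq> [2i].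
  The triangle inequality gives the upper bound k. If T has level i, i.e. T \<subseteq> [2i] but not
  T \<subseteq> [2i - 2], the term 4^-i dominates the remaining ones, whose sum is at most 4^-i / 3;
  since there are 3 \<cdot> 4^(i-1) such T, each level contributes at least 1/2.
\<close>

section \<open>Characters of a Boolean group\<close>

lemma character_continuous: "\<gamma> \<in> dual_group \<Longrightarrow> continuous_on UNIV \<gamma>"
  unfolding dual_group_def by blast

lemma character_norm: "\<gamma> \<in> dual_group \<Longrightarrow> norm (\<gamma> x) = 1"
  unfolding dual_group_def by blast

lemma character_add: "\<gamma> \<in> dual_group \<Longrightarrow> \<gamma> (x + y) = \<gamma> x * \<gamma> y"
  unfolding dual_group_def by blast

lemma character_nonzero: "\<gamma> \<in> dual_group \<Longrightarrow> \<gamma> x \<noteq> 0"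
  by (metis character_norm norm_zero zero_neq_one)

lemma character_zero:
  assumes "\<gamma> \<in> dual_group" shows "\<gamma> 0 = 1"
  using character_add[OF assms, of 0 0] character_nonzero[OF assms, of 0] by simp

lemma character_square:
  assumes "\<gamma> \<in> dual_group" and "x + x = 0"
  shows "\<gamma> x * \<gamma> x = 1"
  using character_add[OF assms(1), of x x] character_zero[OF assms(1)] assms(2) by simp

lemma character_eq_pm1:
  assumes "\<gamma> \<in> dual_group" and "x + x = 0"
  shows "\<gamma> x = 1 \<or> \<gamma> x = -1"
proof -
  have "(\<gamma> x - 1) * (\<gamma> x + 1) = 0"
    using character_square[OF assms] by (simp add: algebra_simps)
  then show ?thesis by (auto simp: add_eq_0_iff2)
qed

lemma dual_group_one: "(\<lambda>x. 1) \<in> dual_group"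
  unfolding dual_group_def by simp

lemma dual_group_mult:
  assumes "\<gamma> \<in> dual_group" "\<delta> \<in> dual_group"
  shows "(\<lambda>x. \<gamma> x * \<delta> x) \<in> dual_group"
  unfolding dual_group_def
proof (intro CollectI conjI allI)
  show "continuous_on UNIV (\<lambda>x. \<gamma> x * \<delta> x)"
    using assms by (intro continuous_on_mult character_continuous)
  show "\<gamma> (x + y) * \<delta> (x + y) = \<gamma> x * \<delta> x * (\<gamma> y * \<delta> y)" for x y
    using assms by (simp add: character_add ac_simps)
  show "norm (\<gamma> x * \<delta> x) = 1" for x
    using assms by (simp add: character_norm norm_mult)
qed

lemma dual_group_cnj:
  assumes "\<gamma> \<in> dual_group"
  shows "(\<lambda>x. cnj (\<gamma> x)) \<in> dual_group"
  unfolding dual_group_def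
  using assms by (auto intro: continuous_on_cnj character_continuous simp: character_add character_norm)

lemma dual_group_prod:
  "finite T \<Longrightarrow> (\<And>j. j \<in> T \<Longrightarrow> f j \<in> dual_group) \<Longrightarrow> (\<lambda>x. \<Prod>j\<in>T. f j x) \<in> dual_group"
proof (induction T rule: finite_induct)
  case empty
  then show ?case using dual_group_one by simp
next
  case (insert a F)
  then show ?case using dual_group_mult[of "f a" "\<lambda>x. \<Prod>j\<in>F. f j x"] by simp
qed

section \<open>Haar integration and Fourier coefficients\<close>

lemma haar_space: "is_haar M \<Longrightarrow> space M = UNIV"
  unfolding is_haar_def by (metis sets_eq_imp_space_eq space_borel)

lemma character_borel_measurable: "is_haar M \<Longrightarrow> \<gamma> \<in> dual_group \<Longrightarrow> \<gamma> \<in> borel_measurable M"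
  unfolding is_haar_def
  by (metis borel_measurable_continuous_onI character_continuous measurable_cong_sets)

lemma character_integrable:
  assumes "is_haar M" "\<gamma> \<in> dual_group"
  shows "integrable M \<gamma>"
proof -
  interpret prob_space M using assms(1) unfolding is_haar_def by auto
  show ?thesis
    using assms by (intro integrable_const_bound[of _ 1]) (simp_all add: character_norm character_borel_measurable)
qed

lemma haar_translate:
  fixes M :: "'a::{ab_group_add,topological_space} measure"
  assumes haar: "is_haar M" and cont: "continuous_on UNIV (\<lambda>p::'a \<times> 'a. fst p + snd p)"
  shows "(\<lambda>x. g + x) \<in> measurable M M" and "distr M M (\<lambda>x. g + x) = M"
proof -
  have "continuous_on UNIV ((\<lambda>p::'a \<times> 'a. fst p + snd p) \<circ> (\<lambda>x. (g, x)))"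
    by (rule continuous_on_compose) (auto intro!: continuous_intros intro: continuous_on_subset[OF cont])
  then have "continuous_on UNIV (\<lambda>x::'a. g + x)" by (simp add: o_def)
  moreover have sets: "sets M = sets borel" using haar unfolding is_haar_def by auto
  ultimately show meas: "(\<lambda>x. g + x) \<in> measurable M M"
    using measurable_cong_sets[OF sets sets] by (simp add: borel_measurable_continuous_onI)
  show "distr M M (\<lambda>x. g + x) = M"
  proof (rule measure_eqI)
    fix A assume "A \<in> sets (distr M M ((+) g))"
    then have A: "A \<in> sets M" by simp
    have "emeasure (distr M M ((+) g)) A = emeasure M ((\<lambda>x. g + x) -` A \<inter> space M)"
      by (rule emeasure_distr[OF meas A])
    also have "(\<lambda>x. g + x) -` A \<inter> space M = (\<lambda>x. - g + x) ` A"
      by (force simp: haar_space[OF haar] intro: rev_image_eqI)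
    also have "emeasure M \<dots> = emeasure M A"
      using haar A unfolding is_haar_def by blast
    finally show "emeasure (distr M M ((+) g)) A = emeasure M A" .
  qed simp
qed

text \<open>Invariance under a translation by \<open>a\<close> with \<open>\<gamma> a \<noteq> 1\<close> forces \<open>\<integral>\<gamma> = \<gamma> a \<integral>\<gamma>\<close>.\<close>
lemma integral_character:
  fixes M :: "'a::{ab_group_add,topological_space} measure"
  assumes haar: "is_haar M" and cont: "continuous_on UNIV (\<lambda>p::'a \<times> 'a. fst p + snd p)"
    and \<gamma>: "\<gamma> \<in> dual_group"
  shows "integral\<^sup>L M \<gamma> = (if \<gamma> = (\<lambda>x. 1) then 1 else 0)"
proof (cases "\<gamma> = (\<lambda>x. 1)")
  case True
  interpret prob_space M using haar unfolding is_haar_def by auto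
  show ?thesis using True by (simp add: prob_space)
next
  case False
  then obtain a where a: "\<gamma> a \<noteq> 1" by auto
  have "integral\<^sup>L M \<gamma> = integral\<^sup>L (distr M M (\<lambda>x. a + x)) \<gamma>"
    using haar_translate[OF haar cont] by simp
  also have "\<dots> = integral\<^sup>L M (\<lambda>x. \<gamma> (a + x))"
    by (rule integral_distr[OF haar_translate(1)[OF haar cont] character_borel_measurable[OF haar \<gamma>]])
  also have "\<dots> = \<gamma> a * integral\<^sup>L M \<gamma>" using character_add[OF \<gamma>] by simp
  finally have "(1 - \<gamma> a) * integral\<^sup>L M \<gamma> = 0" by (simp add: algebra_simps)
  then show ?thesis using a False by simp
qed

lemma integral_character_mult_cnj:
  fixes M :: "'a::{ab_group_add,topological_space} measure"
  assumes haar: "is_haar M" and cont: "continuous_on UNIV (\<lambda>p::'a \<times> 'a. fst p + snd p)"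
    and \<gamma>: "\<gamma> \<in> dual_group" and \<delta>: "\<delta> \<in> dual_group"
  shows "(\<integral>x. \<gamma> x * cnj (\<delta> x) \<partial>M) = (if \<gamma> = \<delta> then 1 else 0)"
proof -
  have cnj_inverse: "cnj (\<delta> x) * \<delta> x = 1" for x
    using complex_norm_square[of "\<delta> x"] character_norm[OF \<delta>, of x] by (simp add: mult.commute)
  have "(\<lambda>x. \<gamma> x * cnj (\<delta> x)) = (\<lambda>x. 1) \<longleftrightarrow> \<gamma> = \<delta>"
  proof
    assume "(\<lambda>x. \<gamma> x * cnj (\<delta> x)) = (\<lambda>x. 1)"
    then have "\<gamma> x * cnj (\<delta> x) * \<delta> x = \<delta> x" for x by (metis mult_1)
    then show "\<gamma> = \<delta>" using cnj_inverse by (simp add: mult.assoc fun_eq_iff)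
  qed (use cnj_inverse in \<open>simp add: mult.commute\<close>)
  then show ?thesis
    using integral_character[OF haar cont dual_group_mult[OF \<gamma> dual_group_cnj[OF \<delta>]]] by simp
qed

lemma fourier_coeff_trig_poly:
  fixes M :: "'a::{ab_group_add,topological_space} measure"
  assumes haar: "is_haar M" and cont: "continuous_on UNIV (\<lambda>p::'a \<times> 'a. fst p + snd p)"
    and S: "finite S" "g ` S \<subseteq> dual_group" and \<gamma>: "\<gamma> \<in> dual_group"
  shows "fourier_coeff M (\<lambda>x. \<Sum>s\<in>S. c s * g s x) \<gamma> = (\<Sum>s\<in>S. if g s = \<gamma> then c s else 0)"
proof -
  have "integrable M (\<lambda>x. c s * (g s x * cnj (\<gamma> x)))" if "s \<in> S" for s
    using that S \<gamma> by (intro integrable_mult_right character_integrable[OF haar] dual_group_mult dual_group_cnj) auto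
  then have "fourier_coeff M (\<lambda>x. \<Sum>s\<in>S. c s * g s x) \<gamma> = (\<Sum>s\<in>S. c s * (\<integral>x. g s x * cnj (\<gamma> x) \<partial>M))"
    unfolding fourier_coeff_def by (simp add: sum_distrib_right mult.assoc)
  also have "\<dots> = (\<Sum>s\<in>S. if g s = \<gamma> then c s else 0)"
    using S \<gamma> by (intro sum.cong) (auto simp: integral_character_mult_cnj[OF haar cont])
  finally show ?thesis .
qed

lemma fourier_coeff_trig_poly_at:
  fixes M :: "'a::{ab_group_add,topological_space} measure"
  assumes haar: "is_haar M" and cont: "continuous_on UNIV (\<lambda>p::'a \<times> 'a. fst p + snd p)"
    and S: "finite S" "g ` S \<subseteq> dual_group" and inj: "inj_on g S" and s: "s \<in> S"
  shows "fourier_coeff M (\<lambda>x. \<Sum>s\<in>S. c s * g s x) (g s) = c s"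
proof -
  have "fourier_coeff M (\<lambda>x. \<Sum>s\<in>S. c s * g s x) (g s) = (\<Sum>s'\<in>S. if g s' = g s then c s' else 0)"
    using s S by (intro fourier_coeff_trig_poly[OF haar cont S]) auto
  also have "\<dots> = (\<Sum>s'\<in>S. if s' = s then c s' else 0)"
    using inj_onD[OF inj _ _ s] by (intro sum.cong) auto
  finally show ?thesis using s S(1) by simp
qed

lemma A_norm_trig_poly:
  fixes M :: "'a::{ab_group_add,topological_space} measure"
  assumes haar: "is_haar M" and cont: "continuous_on UNIV (\<lambda>p::'a \<times> 'a. fst p + snd p)"
    and S: "finite S" "g ` S \<subseteq> dual_group" and inj: "inj_on g S"
  shows "A_norm M (\<lambda>x. \<Sum>s\<in>S. c s * g s x) = ennreal (\<Sum>s\<in>S. norm (c s))"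
proof -
  let ?F = "fourier_coeff M (\<lambda>x. \<Sum>s\<in>S. c s * g s x)"
  have "?F \<gamma> = 0" if "\<gamma> \<in> dual_group - g ` S" for \<gamma>
    using that by (subst fourier_coeff_trig_poly[OF haar cont S]) (auto intro!: sum.neutral)
  then have "A_norm M (\<lambda>x. \<Sum>s\<in>S. c s * g s x) = (\<Sum>\<^sub>\<infinity>\<gamma>\<in>g ` S. ennreal (norm (?F \<gamma>)))"
    unfolding A_norm_def by (intro infsum_cong_neutral) (use S in auto)
  also have "\<dots> = (\<Sum>s\<in>S. ennreal (norm (c s)))"
    using S(1) by (simp add: sum.reindex[OF inj] fourier_coeff_trig_poly_at[OF haar cont S inj])
  also have "\<dots> = ennreal (\<Sum>s\<in>S. norm (c s))"
    by (simp add: sum_ennreal)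
  finally show ?thesis .
qed

lemma fourier_coeff_indicator_one:
  assumes "is_haar M" "A \<in> sets M"
  shows "fourier_coeff M (indicator A) (\<lambda>x. 1) = measure M A"
proof -
  have "(\<lambda>x. indicator A x * cnj 1) = (\<lambda>x. complex_of_real (indicator A x))"
    by (auto simp: indicator_def)
  then show ?thesis
    using assms haar_space[OF assms(1)] unfolding fourier_coeff_def by simp
qed

section \<open>Groups of exponent two\<close>

lemma mult_closed_union_coset:
  fixes W :: "'b::comm_monoid_mult set"
  assumes closed: "\<And>a b. a \<in> W \<Longrightarrow> b \<in> W \<Longrightarrow> a * b \<in> W" and d: "d * d = 1"
    and "a \<in> W \<union> (*) d ` W" "b \<in> W \<union> (*) d ` W"
  shows "a * b \<in> W \<union> (*) d ` W"
proof -
  have mem: "x \<in> W \<union> (*) d ` W \<longleftrightarrow> x \<in> W \<or> d * x \<in> W" for x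
    using d by (force simp: mult.assoc[symmetric] intro: image_eqI[where x = "d * x"])
  have "d * (a * b) = d * a * b" "d * (a * b) = a * (d * b)" "a * b = d * a * (d * b)"
    using d by (simp_all add: ac_simps)
  then show ?thesis
    using assms(3,4) unfolding mem by (metis closed)
qed

lemma card_union_coset:
  fixes W :: "'b::comm_monoid_mult set"
  assumes "finite W" and closed: "\<And>a b. a \<in> W \<Longrightarrow> b \<in> W \<Longrightarrow> a * b \<in> W"
    and square: "\<And>a. a \<in> W \<Longrightarrow> a * a = 1" and d: "d * d = 1" "d \<notin> W"
  shows "card (W \<union> (*) d ` W) = 2 * card W"
proof -
  have "W \<inter> (*) d ` W = {}"
  proof safe
    fix a assume a: "a \<in> W" "d * a \<in> W"
    have "d * a * a = d" using square[OF a(1)] by (simp add: mult.assoc)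
    then show "d * a \<in> {}" using closed[OF a(2) a(1)] d(2) by simp
  qed
  moreover have "inj_on ((*) d) W"
    by (rule inj_onI) (metis d(1) mult.assoc mult.left_neutral)
  ultimately show ?thesis
    using assms(1) by (simp add: card_Un_disjoint card_image)
qed

text \<open>Enlarge a subgroup one coset at a time.\<close>
lemma card_eq_power_two_if_square_one:
  fixes V :: "'b::comm_monoid_mult set"
  assumes V: "finite V" "1 \<in> V" and closed: "\<And>a b. a \<in> V \<Longrightarrow> b \<in> V \<Longrightarrow> a * b \<in> V"
    and square: "\<And>a. a \<in> V \<Longrightarrow> a * a = 1"
  shows "\<exists>m. card V = 2 ^ m"
proof -
  have "\<exists>m. card V = 2 ^ m"
    if "W \<subseteq> V" "\<And>a b. a \<in> W \<Longrightarrow> b \<in> W \<Longrightarrow> a * b \<in> W" "card W = 2 ^ n" for W n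
    using that
  proof (induction "card V - card W" arbitrary: W n rule: less_induct)
    case less
    show ?case
    proof (cases "W = V")
      case True
      then show ?thesis using less.prems(3) by blast
    next
      case False
      then obtain d where d: "d \<in> V" "d \<notin> W" using less.prems(1) by blast
      define W' where "W' = W \<union> (*) d ` W"
      have W: "finite W" "\<And>a. a \<in> W \<Longrightarrow> a * a = 1"
        using less.prems(1) V(1) square by (auto intro: finite_subset)
      have card: "card W' = 2 ^ Suc n"
        unfolding W'_def using card_union_coset[OF W(1) less.prems(2) W(2) square[OF d(1)] d(2)] less.prems(3)
        by simp
      have sub: "W' \<subseteq> V" using less.prems(1) d(1) closed unfolding W'_def by auto
      have "card W < card W'" using card less.prems(3) by simp
      then have "card V - card W' < card V - card W"
        using card_mono[OF V(1) sub] by (intro diff_less_mono2) auto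
      then show ?thesis
        using less.hyps sub mult_closed_union_coset[OF less.prems(2) square[OF d(1)]] card
        unfolding W'_def by blast
    qed
  qed
  from this[of "{1}" 0] show ?thesis using V(2) by simp
qed

lemma card_dual_subgroup_eq_power_two:
  fixes V :: "('a::{ab_group_add,topological_space} \<Rightarrow> complex) set"
  assumes "\<forall>x::'a. x + x = 0" "dual_subgroup V" "finite V"
  shows "\<exists>m. card V = 2 ^ m"
proof (rule card_eq_power_two_if_square_one)
  show "1 \<in> V" "\<And>a b. a \<in> V \<Longrightarrow> b \<in> V \<Longrightarrow> a * b \<in> V"
    using assms(2) unfolding dual_subgroup_def one_fun_def times_fun_def by blast+
  show "a * a = 1" if "a \<in> V" for a
  proof -
    have "a \<in> dual_group" using assms(2) that unfolding dual_subgroup_def by blast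
    then show ?thesis using assms(1) by (simp add: fun_eq_iff character_square)
  qed
qed fact

lemma alpha_eq: "alpha k = (1 - (1/4) ^ k) / 3"
  unfolding alpha_def sum_gp by (auto simp: field_simps)

lemma frac_alpha_mult_power_two:
  assumes "(2::nat) ^ m \<le> 4 ^ k - 1"
  shows "1/12 \<le> frac (alpha k * 2 ^ m) * (1 - frac (alpha k * 2 ^ m))"
proof -
  define r :: nat where "r = 2 ^ m mod 3"
  define d :: real where "d = 2 ^ m / 4 ^ k"
  have r: "r = 1 \<or> r = 2"
    unfolding r_def
  proof (induction m)
    case (Suc m)
    have "(2::nat) ^ Suc m mod 3 = 2 * (2 ^ m mod 3) mod 3" by (simp add: mod_mult_right_eq)
    with Suc show ?case by auto
  qed simp
  have "(2::nat) ^ m < 2 ^ (2 * k)"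
    using le_less_trans[OF assms, of "4 ^ k"] by (simp add: power_mult)
  then have "(2::nat) ^ Suc m \<le> 2 ^ (2 * k)"
    by (intro power_increasing) auto
  then have "2 * 2 ^ m \<le> (4::nat) ^ k"
    by (simp add: power_mult)
  then have "2 * d \<le> 1"
    unfolding d_def using of_nat_le_iff[of "2 * 2 ^ m" "4 ^ k", where 'a=real] by (simp add: field_simps)
  moreover have "0 < d" unfolding d_def by simp
  moreover have "alpha k * 2 ^ m = real (2 ^ m div 3) + (real r - d) / 3"
  proof -
    have N: "(2::real) ^ m = 3 * real (2 ^ m div 3) + real r"
      unfolding r_def by (metis div_mult_mod_eq mult.commute of_nat_add of_nat_mult of_nat_numeral of_nat_power)
    have "alpha k * 2 ^ m = (2 ^ m - d) / 3"
      unfolding alpha_eq d_def by (simp add: field_simps power_one_over)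
    also have "\<dots> = real (2 ^ m div 3) + (real r - d) / 3"
      by (subst N) (simp add: field_simps)
    finally show ?thesis .
  qed
  ultimately have "frac (alpha k * 2 ^ m) = (real r - d) / 3"
    using r by (subst frac_unique_iff) auto
  moreover have "1/12 \<le> t * (1 - t)" if "1/6 \<le> t" "t \<le> 5/6" for t :: real
  proof -
    have "t * (1 - t) = (t - 1/6) * (5/6 - t) + 5/36" by (simp add: field_simps)
    moreover have "0 \<le> (t - 1/6) * (5/6 - t)" using that by simp
    ultimately show ?thesis by linarith
  qed
  ultimately show ?thesis
    using r \<open>0 < d\<close> \<open>2 * d \<le> 1\<close> by auto
qed

lemma frac_alpha_card_dual_subgroup:
  fixes V :: "('a::{ab_group_add,topological_space} \<Rightarrow> complex) set"
  assumes "\<forall>x::'a. x + x = 0" "dual_subgroup V" "finite V" "card V \<le> 4 ^ k - 1"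
  shows "1/12 \<le> frac (alpha k * real (card V)) * (1 - frac (alpha k * real (card V)))"
proof -
  obtain m where "card V = 2 ^ m"
    using card_dual_subgroup_eq_power_two[OF assms(1-3)] by blast
  then show ?thesis using frac_alpha_mult_power_two[of m k] assms(4) by simp
qed

section \<open>Nested coefficient sums\<close>

definition nested_coeff :: "(nat \<Rightarrow> nat set \<Rightarrow> complex) \<Rightarrow> nat \<Rightarrow> nat set \<Rightarrow> complex" where
  "nested_coeff w k T = (\<Sum>i\<in>{1..k}. if T \<subseteq> {0..<2*i} then w i T else 0)"

lemma sum_Pow_if_subset:
  assumes "A \<subseteq> B" "finite B"
  shows "(\<Sum>T\<in>Pow B. if T \<subseteq> A then f T else 0) = (\<Sum>T\<in>Pow A. f T)"
proof -
  have "Pow B \<inter> {T. T \<subseteq> A} = Pow A" using assms(1) by auto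
  then show ?thesis using assms(2) by (simp add: sum.If_cases)
qed

lemma sum_norm_nested_coeff_le:
  assumes nw: "\<And>i T. norm (w i T) = (1/4) ^ i"
  shows "(\<Sum>T\<in>Pow {0..<2*k}. norm (nested_coeff w k T)) \<le> k"
proof -
  have "(\<Sum>T\<in>Pow {0..<2*k}. norm (nested_coeff w k T))
      \<le> (\<Sum>T\<in>Pow {0..<2*k}. \<Sum>i\<in>{1..k}. if T \<subseteq> {0..<2*i} then (1/4::real) ^ i else 0)"
    unfolding nested_coeff_def
    by (intro sum_mono order.trans[OF norm_sum] eq_refl sum.cong) (simp_all add: nw)
  also have "\<dots> = (\<Sum>i\<in>{1..k}. \<Sum>T\<in>Pow {0..<2*i}. (1/4::real) ^ i)"
    by (subst sum.swap) (intro sum.cong refl sum_Pow_if_subset; simp)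
  also have "\<dots> = (\<Sum>i\<in>{1..k}. 1)"
    by (simp add: card_Pow power_mult power_one_over)
  finally show ?thesis by simp
qed

lemma sum_quarter_powers_tail_le: "(\<Sum>j=Suc i..k. (1/4::real) ^ j) \<le> (1/4) ^ i / 3"
  unfolding sum_gp by (auto simp: field_simps)

lemma norm_nested_coeff_ge:
  assumes nw: "\<And>i T. norm (w i T) = (1/4) ^ i"
    and i: "i \<in> {1..k}" and T: "T \<subseteq> {0..<2*i}" "\<not> T \<subseteq> {0..<2*(i-1)}"
  shows "2/3 * (1/4) ^ i \<le> norm (nested_coeff w k T)"
proof -
  define g where "g j = (if T \<subseteq> {0..<2*j} then w j T else 0)" for j
  have split: "nested_coeff w k T = w i T + (\<Sum>j\<in>{1..k}-{i}. g j)"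
    unfolding nested_coeff_def g_def[symmetric] using i T by (simp add: sum.remove g_def)
  have "(\<Sum>j\<in>{1..k}-{i}. norm (g j)) = (\<Sum>j\<in>{Suc i..k}. norm (g j))"
  proof (rule sum.mono_neutral_right)
    show "\<forall>j\<in>{1..k}-{i}-{Suc i..k}. norm (g j) = 0"
    proof
      fix j assume "j \<in> {1..k}-{i}-{Suc i..k}"
      then have "{0..<2*j} \<subseteq> {0..<2*(i-1)}" by auto
      then show "norm (g j) = 0" using T(2) unfolding g_def by auto
    qed
  qed (use i in auto)
  also have "\<dots> \<le> (\<Sum>j\<in>{Suc i..k}. (1/4) ^ j)"
    by (intro sum_mono) (simp add: g_def nw)
  also have "\<dots> \<le> (1/4) ^ i / 3" by (rule sum_quarter_powers_tail_le)
  finally have "norm (\<Sum>j\<in>{1..k}-{i}. g j) \<le> (1/4) ^ i / 3"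
    by (rule order.trans[OF norm_sum])
  then show ?thesis
    using norm_diff_ineq[of "w i T" "\<Sum>j\<in>{1..k}-{i}. g j"] by (simp add: split nw)
qed

lemma sum_norm_nested_coeff_ge:
  assumes nw: "\<And>i T. norm (w i T) = (1/4) ^ i"
  shows "k / 2 \<le> (\<Sum>T\<in>Pow {0..<2*k}. norm (nested_coeff w k T))"
proof -
  define L where "L i = Pow {0..<2*i} - Pow {0..<2*(i-1)}" for i :: nat
  have layer: "1/2 \<le> (\<Sum>T\<in>L i. norm (nested_coeff w k T))" if i: "i \<in> {1..k}" for i
  proof -
    obtain j where j: "i = Suc j" using i by (cases i) auto
    have "card (L i) = 4 ^ Suc j - 4 ^ j"
      unfolding L_def j by (subst card_Diff_subset) (auto simp: card_Pow power_mult)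
    then have "(\<Sum>T\<in>L i. 2/3 * (1/4::real) ^ i) = 1/2"
      by (simp add: j power_one_over)
    moreover have "(\<Sum>T\<in>L i. 2/3 * (1/4::real) ^ i) \<le> (\<Sum>T\<in>L i. norm (nested_coeff w k T))"
      by (intro sum_mono norm_nested_coeff_ge[OF nw i]) (auto simp: L_def)
    ultimately show ?thesis by simp
  qed
  have "L a \<inter> L b = {}" if "a < b" for a b
  proof -
    have "{0..<2*a} \<subseteq> {0..<2*(b-1)}" using that by auto
    then show ?thesis unfolding L_def by auto
  qed
  then have disjoint: "disjoint_family_on L {1..k}"
    unfolding disjoint_family_on_def by (metis Int_commute linorder_neqE_nat)
  have "k / 2 = (\<Sum>i\<in>{1..k}. 1/2::real)" by simp
  also have "\<dots> \<le> (\<Sum>i\<in>{1..k}. \<Sum>T\<in>L i. norm (nested_coeff w k T))"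
    by (intro sum_mono layer)
  also have "\<dots> = (\<Sum>T\<in>(\<Union>i\<in>{1..k}. L i). norm (nested_coeff w k T))"
    by (intro sum.UNION_disjoint_family[symmetric] disjoint) (auto simp: L_def)
  also have "\<dots> \<le> (\<Sum>T\<in>Pow {0..<2*k}. norm (nested_coeff w k T))"
    by (intro sum_mono2) (auto simp: L_def)
  finally show ?thesis .
qed

section \<open>Walsh characters and the sets A_i\<close>

definition walsh :: "(nat \<Rightarrow> 'a \<Rightarrow> complex) \<Rightarrow> nat set \<Rightarrow> 'a \<Rightarrow> complex" where
  "walsh chi T = (\<lambda>x. \<Prod>j\<in>T. chi j x)"

lemma obtain_independent_characters:
  assumes "f2_dim_ge D n"
  obtains chi where "\<And>j. j < n \<Longrightarrow> chi j \<in> D"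
    and "\<And>T. T \<subseteq> {0..<n} \<Longrightarrow> T \<noteq> {} \<Longrightarrow> walsh chi T \<noteq> (\<lambda>x. 1)"
proof -
  obtain S where S: "S \<subseteq> D" "finite S" "card S = n"
    and indep: "\<forall>T\<subseteq>S. T \<noteq> {} \<longrightarrow> (\<lambda>x. \<Prod>\<gamma>\<in>T. \<gamma> x) \<noteq> (\<lambda>x. 1)"
    using assms unfolding f2_dim_ge_def by blast
  obtain e where e: "bij_betw e {0..<n} S"
    using ex_bij_betw_nat_finite[OF S(2)] S(3) by auto
  show ?thesis
  proof (rule that)
    show "e j \<in> D" if "j < n" for j
      using that e S(1) bij_betw_apply by fastforce
    fix T assume T: "T \<subseteq> {0..<n}" "T \<noteq> {}"
    have "walsh e T = (\<lambda>x. \<Prod>\<gamma>\<in>e ` T. \<gamma> x)"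
      using inj_on_subset[OF bij_betw_imp_inj_on[OF e] T(1)] by (simp add: walsh_def prod.reindex)
    moreover have "e ` T \<subseteq> S" using T(1) e bij_betw_imp_surj_on by blast
    ultimately show "walsh e T \<noteq> (\<lambda>x. 1)" using indep T(2) by auto
  qed
qed

definition atom_sign :: "nat \<Rightarrow> nat \<Rightarrow> complex" where
  "atom_sign i j = (if j < 2*i - 2 then 1 else -1)"

definition atom :: "(nat \<Rightarrow> 'a \<Rightarrow> complex) \<Rightarrow> nat \<Rightarrow> 'a set" where
  "atom chi i = {x. \<forall>j<2*i. chi j x = atom_sign i j}"

definition atom_coeff :: "nat \<Rightarrow> nat set \<Rightarrow> complex" where
  "atom_coeff i T = (1/4) ^ i * (\<Prod>j\<in>T. atom_sign i j)"

lemma norm_atom_coeff: "norm (atom_coeff i T) = (1/4) ^ i"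
proof -
  have "norm (atom_sign i j) = 1" for j by (simp add: atom_sign_def)
  then show ?thesis by (simp add: atom_coeff_def norm_mult norm_power flip: prod_norm)
qed

lemma disjoint_family_atom: "disjoint_family_on (atom chi) {1..}"
proof -
  have "atom chi i \<inter> atom chi i' = {}" if "1 \<le> i" "i < i'" for i i'
    using that by (force simp: atom_def atom_sign_def)
  then show ?thesis
    unfolding disjoint_family_on_def by (metis Int_commute atLeast_iff linorder_neqE_nat)
qed

lemma add_subgroup_common_kernel:
  assumes "\<And>j. j < n \<Longrightarrow> chi j \<in> dual_group"
  shows "add_subgroup {y. \<forall>j<n. chi j y = 1}"
  unfolding add_subgroup_def
proof (intro conjI ballI)
  show "0 \<in> {y. \<forall>j<n. chi j y = 1}" using assms character_zero by auto
  fix x y assume x: "x \<in> {y. \<forall>j<n. chi j y = 1}" and y: "y \<in> {y. \<forall>j<n. chi j y = 1}"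
  then show "x + y \<in> {y. \<forall>j<n. chi j y = 1}" by (simp add: character_add assms)
  have "chi j (- x) = 1" if "j < n" for j
    using character_add[OF assms[OF that], of "- x" x] character_zero[OF assms[OF that]] x that by simp
  then show "- x \<in> {y. \<forall>j<n. chi j y = 1}" by simp
qed

lemma level_set_eq_translate_kernel:
  assumes "\<And>j. j < n \<Longrightarrow> chi j \<in> dual_group" and x0: "x0 \<in> {x. \<forall>j<n. chi j x = c j}"
  shows "{x. \<forall>j<n. chi j x = c j} = (\<lambda>y. x0 + y) ` {y. \<forall>j<n. chi j y = 1}"
proof (intro equalityI subsetI)
  fix z assume z: "z \<in> {x. \<forall>j<n. chi j x = c j}"
  have "chi j (z - x0) = 1" if "j < n" for j
    using character_add[OF assms(1)[OF that], of "z - x0" x0] character_nonzero[OF assms(1)[OF that], of x0]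
      z x0 that by simp
  then show "z \<in> (\<lambda>y. x0 + y) ` {y. \<forall>j<n. chi j y = 1}"
    by (intro image_eqI[of _ _ "z - x0"]) auto
qed (use x0 in \<open>auto simp: character_add assms\<close>)

locale independent_characters =
  fixes M :: "'a::{ab_group_add,topological_space} measure" and chi :: "nat \<Rightarrow> 'a \<Rightarrow> complex" and k :: nat
  assumes haar: "is_haar M"
    and continuous_add: "continuous_on UNIV (\<lambda>p::'a \<times> 'a. fst p + snd p)"
    and exponent_two: "\<And>x::'a. x + x = 0"
    and chi_dual: "\<And>j. j < 2*k \<Longrightarrow> chi j \<in> dual_group"
    and walsh_ne_one: "\<And>T. T \<subseteq> {0..<2*k} \<Longrightarrow> T \<noteq> {} \<Longrightarrow> walsh chi T \<noteq> (\<lambda>x. 1)"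
begin

lemma walsh_dual: "T \<subseteq> {0..<2*k} \<Longrightarrow> walsh chi T \<in> dual_group"
  unfolding walsh_def by (intro dual_group_prod chi_dual) (auto intro: finite_subset)

lemma walsh_mult:
  assumes "T \<subseteq> {0..<2*k}" "T' \<subseteq> {0..<2*k}"
  shows "walsh chi T x * walsh chi T' x = walsh chi ((T - T') \<union> (T' - T)) x"
proof -
  have restrict: "walsh chi S x = (\<Prod>j\<in>{0..<2*k}. if j \<in> S then chi j x else 1)"
    if "S \<subseteq> {0..<2*k}" for S
    using prod.inter_restrict[of "{0..<2*k}" "\<lambda>j. chi j x" S] that
    by (simp add: walsh_def Int_absorb1)
  have square: "chi j x * chi j x = 1" if "j < 2*k" for j
    using character_square[OF chi_dual[OF that] exponent_two] .
  have "walsh chi T x * walsh chi T' x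
      = (\<Prod>j\<in>{0..<2*k}. (if j \<in> T then chi j x else 1) * (if j \<in> T' then chi j x else 1))"
    using assms by (simp add: restrict prod.distrib)
  also have "\<dots> = (\<Prod>j\<in>{0..<2*k}. if j \<in> (T - T') \<union> (T' - T) then chi j x else 1)"
    using square by (intro prod.cong) auto
  also have "\<dots> = walsh chi ((T - T') \<union> (T' - T)) x"
    using assms by (intro restrict[symmetric]) auto
  finally show ?thesis .
qed

lemma inj_on_walsh: "inj_on (walsh chi) (Pow {0..<2*k})"
proof (rule inj_onI)
  fix T T' assume T: "T \<in> Pow {0..<2*k}" and T': "T' \<in> Pow {0..<2*k}" and eq: "walsh chi T = walsh chi T'"
  have "walsh chi ((T - T') \<union> (T' - T)) x = 1" for x
  proof -
    have "walsh chi ((T - T') \<union> (T' - T)) x = walsh chi T x * walsh chi T x"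
      using walsh_mult[of T T' x] T T' eq by simp
    also have "\<dots> = walsh chi {} x" using walsh_mult[of T T x] T by simp
    finally show ?thesis by (simp add: walsh_def)
  qed
  then have "(T - T') \<union> (T' - T) = {}"
    using walsh_ne_one[of "(T - T') \<union> (T' - T)"] T T' by auto
  then show "T = T'" by blast
qed

lemma indicator_atom:
  assumes "i \<le> k"
  shows "indicator (atom chi i) x = (\<Sum>T\<in>Pow {0..<2*i}. atom_coeff i T * walsh chi T x)"
proof -
  let ?J = "{0..<2*i}"
  have chi_pm1: "chi j x = 1 \<or> chi j x = -1" if "j < 2*i" for j
    using that assms by (intro character_eq_pm1 chi_dual exponent_two) auto
  have "indicator (atom chi i) x = (\<Prod>j\<in>?J. if chi j x = atom_sign i j then 1 else 0 :: complex)"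
    by (auto simp: atom_def indicator_def)
  also have "\<dots> = (\<Prod>j\<in>?J. atom_sign i j * chi j x / 2 + 1/2)"
  proof (rule prod.cong[OF refl])
    fix j assume "j \<in> ?J"
    with chi_pm1 consider "chi j x = 1" | "chi j x = -1" by fastforce
    then show "(if chi j x = atom_sign i j then 1 else 0) = atom_sign i j * chi j x / 2 + 1/2"
      by cases (simp_all add: atom_sign_def)
  qed
  also have "\<dots> = (\<Sum>T\<in>Pow ?J. (\<Prod>j\<in>T. atom_sign i j * chi j x / 2) * (\<Prod>j\<in>?J - T. 1/2))"
    by (rule prod_add) simp
  also have "\<dots> = (\<Sum>T\<in>Pow ?J. atom_coeff i T * walsh chi T x)"
  proof (rule sum.cong[OF refl])
    fix T assume "T \<in> Pow ?J"
    moreover from this have "card T \<le> 2 * i" using card_mono[of ?J T] by simp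
    ultimately have "card T + card (?J - T) = 2 * i"
      by (simp add: card_Diff_subset finite_subset)
    then have "(1/2::complex) ^ card T * (1/2) ^ card (?J - T) = (1/4) ^ i"
      by (simp add: power_add[symmetric] power_mult power_one_over)
    then show "(\<Prod>j\<in>T. atom_sign i j * chi j x / 2) * (\<Prod>j\<in>?J - T. 1/2) = atom_coeff i T * walsh chi T x"
      by (simp add: prod.distrib prod_dividef atom_coeff_def walsh_def power_one_over)
  qed
  finally show ?thesis .
qed

lemma atom_closed: "i \<le> k \<Longrightarrow> closed (atom chi i)"
proof -
  assume "i \<le> k"
  then have "closed {x. chi j x = atom_sign i j}" if "j < 2*i" for j
    using that by (intro closed_Collect_eq continuous_on_const character_continuous chi_dual) auto
  moreover have "atom chi i = (\<Inter>j<2*i. {x. chi j x = atom_sign i j})"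
    unfolding atom_def by auto
  ultimately show ?thesis by auto
qed

lemma atom_in_sets: "i \<le> k \<Longrightarrow> atom chi i \<in> sets M"
  using atom_closed haar unfolding is_haar_def by auto

lemma measure_atom:
  assumes "i \<le> k"
  shows "measure M (atom chi i) = (1/4) ^ i"
proof -
  have walsh: "walsh chi ` Pow {0..<2*i} \<subseteq> dual_group" "inj_on (walsh chi) (Pow {0..<2*i})"
    using assms by (auto intro!: walsh_dual inj_on_subset[OF inj_on_walsh])
  have "complex_of_real (measure M (atom chi i)) = fourier_coeff M (indicator (atom chi i)) (walsh chi {})"
    using fourier_coeff_indicator_one[OF haar atom_in_sets[OF assms]] by (simp add: walsh_def)
  also have "\<dots> = atom_coeff i {}"
    unfolding indicator_atom[OF assms, abs_def]
    by (rule fourier_coeff_trig_poly_at[OF haar continuous_add _ walsh]) auto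
  also have "\<dots> = complex_of_real ((1/4) ^ i)" by (simp add: atom_coeff_def)
  finally show ?thesis by (simp only: of_real_eq_iff)
qed

lemma atom_eq_coset:
  assumes "1 \<le> i" "i \<le> k"
  shows "\<exists>H x. add_subgroup H \<and> atom chi i = (\<lambda>y. x + y) ` H"
proof -
  have chi_dual': "j < 2*i \<Longrightarrow> chi j \<in> dual_group" for j
    using assms by (intro chi_dual) auto
  have "atom chi i \<noteq> {}" using measure_atom[OF assms(2)] by auto
  then obtain x0 where "x0 \<in> atom chi i" by blast
  from level_set_eq_translate_kernel[OF chi_dual' this[unfolded atom_def]]
  have "atom chi i = (\<lambda>y. x0 + y) ` {y. \<forall>j<2*i. chi j y = 1}"
    by (simp only: atom_def)
  with add_subgroup_common_kernel[OF chi_dual'] show ?thesis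
    by (intro exI conjI)
qed

lemma indicator_union_atoms:
  "indicator (\<Union>i\<in>{1..k}. atom chi i) x = (\<Sum>T\<in>Pow {0..<2*k}. nested_coeff atom_coeff k T * walsh chi T x)"
proof -
  have "indicator (\<Union>i\<in>{1..k}. atom chi i) x = (\<Sum>i\<in>{1..k}. indicator (atom chi i) x :: complex)"
    by (intro indicator_UN_disjoint disjoint_family_on_mono[OF _ disjoint_family_atom]) auto
  also have "\<dots> = (\<Sum>i\<in>{1..k}. \<Sum>T\<in>Pow {0..<2*k}. if T \<subseteq> {0..<2*i} then atom_coeff i T * walsh chi T x else 0)"
    by (intro sum.cong refl) (simp add: indicator_atom sum_Pow_if_subset)
  also have "\<dots> = (\<Sum>T\<in>Pow {0..<2*k}. nested_coeff atom_coeff k T * walsh chi T x)"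
    unfolding nested_coeff_def sum_distrib_right by (subst sum.swap) (intro sum.cong refl; simp)
  finally show ?thesis .
qed

lemma A_norm_union_atoms:
  "A_norm M (indicator (\<Union>i\<in>{1..k}. atom chi i))
    = ennreal (\<Sum>T\<in>Pow {0..<2*k}. norm (nested_coeff atom_coeff k T))"
  unfolding indicator_union_atoms[abs_def]
  by (rule A_norm_trig_poly[OF haar continuous_add _ _ inj_on_walsh]) (auto simp: walsh_dual)

lemma union_atoms_witness:
  "\<exists>(A :: 'a set) (As :: nat \<Rightarrow> 'a set).
      A \<in> sets M \<and> measure M A = alpha k
    \<and> A = (\<Union>i\<in>{1..k}. As i)
    \<and> disjoint_family_on As {1..k}
    \<and> (\<forall>i\<in>{1..k}. As i \<in> sets M \<and> measure M (As i) = (1/4) ^ i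
          \<and> (\<exists>H x. add_subgroup H \<and> As i = (\<lambda>y. x + y) ` H))
    \<and> ennreal (real k / 2) \<le> A_norm M (indicator A)
    \<and> A_norm M (indicator A) \<le> ennreal (real k)"
proof (rule exI[of _ "\<Union>i\<in>{1..k}. atom chi i"], rule exI[of _ "atom chi"], intro conjI ballI)
  interpret prob_space M using haar unfolding is_haar_def by auto
  have disjoint: "disjoint_family_on (atom chi) {1..k}"
    by (rule disjoint_family_on_mono[OF _ disjoint_family_atom]) auto
  show "(\<Union>i\<in>{1..k}. atom chi i) \<in> sets M"
    using atom_in_sets by auto
  show "measure M (\<Union>i\<in>{1..k}. atom chi i) = alpha k"
    using atom_in_sets measure_atom unfolding alpha_def
    by (subst finite_measure_finite_Union[OF _ _ disjoint]) auto
  show "disjoint_family_on (atom chi) {1..k}" by (fact disjoint)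
  show "ennreal (real k / 2) \<le> A_norm M (indicator (\<Union>i\<in>{1..k}. atom chi i))"
    unfolding A_norm_union_atoms by (intro ennreal_leI sum_norm_nested_coeff_ge norm_atom_coeff)
  show "A_norm M (indicator (\<Union>i\<in>{1..k}. atom chi i)) \<le> ennreal (real k)"
    unfolding A_norm_union_atoms by (intro ennreal_leI sum_norm_nested_coeff_le norm_atom_coeff)
  fix i assume "i \<in> {1..k}"
  then show "atom chi i \<in> sets M" "measure M (atom chi i) = (1/4) ^ i"
    and "\<exists>H x. add_subgroup H \<and> atom chi i = (\<lambda>y. x + y) ` H"
    using atom_in_sets measure_atom atom_eq_coset by auto
qed simp

end

theorem mainTheorem14:
  fixes M :: "'a::{ab_group_add,t2_space} measure" and k :: nat
  assumes "compact (UNIV :: 'a set)"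
    and "continuous_on UNIV (\<lambda>p::'a \<times> 'a. fst p + snd p)"
    and "\<forall>x::'a. x + x = 0"
    and "is_haar M"
    and "k \<ge> 1"
    and "f2_dim_ge (dual_group :: ('a \<Rightarrow> complex) set) (2 * k)"
  shows "(\<forall>V :: ('a \<Rightarrow> complex) set. dual_subgroup V \<and> finite V \<and> card V \<le> 4 ^ k - 1 \<longrightarrow>
            frac (alpha k * real (card V)) * (1 - frac (alpha k * real (card V))) \<ge> 1 / 12)
       \<and> (\<exists>(A :: 'a set) (As :: nat \<Rightarrow> 'a set).
            A \<in> sets M \<and> measure M A = alpha k
          \<and> A = (\<Union>i\<in>{1..k}. As i)
          \<and> disjoint_family_on As {1..k}
          \<and> (\<forall>i\<in>{1..k}. As i \<in> sets M \<and> measure M (As i) = (1/4) ^ i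
                \<and> (\<exists>H x. add_subgroup H \<and> As i = (\<lambda>y. x + y) ` H))
          \<and> ennreal (real k / 2) \<le> A_norm M (indicator A)
          \<and> A_norm M (indicator A) \<le> ennreal (real k))"
proof -
  \<comment> \<open>Compactness only matters for the existence of the Haar measure, which is assumed;
    the case \<open>k = 0\<close> would be harmless.\<close>
  obtain chi :: "nat \<Rightarrow> 'a \<Rightarrow> complex" where chi: "\<And>j. j < 2 * k \<Longrightarrow> chi j \<in> dual_group"
    and independent: "\<And>T. T \<subseteq> {0..<2 * k} \<Longrightarrow> T \<noteq> {} \<Longrightarrow> walsh chi T \<noteq> (\<lambda>x. 1)"
    using assms(6) by (rule obtain_independent_characters) blast
  interpret independent_characters M chi k
    using assms(2-4) chi independent by unfold_locales auto
  show ?thesis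
    by (intro conjI allI impI union_atoms_witness frac_alpha_card_dual_subgroup[OF assms(3)]) auto
qed

end
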